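(* For every integer $n\geq 13$ there exists a neutral graph on $n$ vertices that is not a tree.
   Context: All graphs are finite, simple and connected. For a graph $G=(V,E)$ with $m=|E|\geq 1$ edges, let $d_u$ denote the degree of vertex $u$ and write sums over edges $e_{uv}\in E$ (each edge counted once). The assortativity coefficient of $G$ is $$r(G)=\frac{m^{-1}\sum_{e_{uv}\in E} d_{u}d_{v}-\Big[m^{-1}\sum_{e_{uv}\in E} \tfrac{1}{2}(d_{u}+d_{v})\Big]^{2}}{m^{-1}\sum_{e_{uv}\in E} \tfrac{1}{2}(d^{2}_{u}+d^{2}_{v})-\Big[m^{-1}\sum_{e_{uv}\in E} \tfrac{1}{2}(d_{u}+d_{v})\Big]^{2}},$$ defined whenever the denominator is nonzero. $G$ is called neutral if $r(G)$ is defined and $r(G)=0$. *)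

theory Defs
  imports Complex_Main
begin

definition simple_graph :: "'a set \<Rightarrow> 'a set set \<Rightarrow> bool" where
  "simple_graph V E \<longleftrightarrow> finite V \<and> (\<forall>e\<in>E. \<exists>u v. u \<in> V \<and> v \<in> V \<and> u \<noteq> v \<and> e = {u, v})"

definition adj :: "'a set set \<Rightarrow> 'a \<Rightarrow> 'a \<Rightarrow> bool" where
  "adj E u v \<longleftrightarrow> {u, v} \<in> E"

definition connected_graph :: "'a set \<Rightarrow> 'a set set \<Rightarrow> bool" where
  "connected_graph V E \<longleftrightarrow> V \<noteq> {} \<and>
     (\<forall>u\<in>V. \<forall>v\<in>V. (u, v) \<in> {(x, y). adj E x y}\<^sup>*)"

definition is_cycle :: "'a set set \<Rightarrow> 'a list \<Rightarrow> bool" where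
  "is_cycle E cs \<longleftrightarrow> length cs \<ge> 3 \<and> distinct cs \<and>
     (\<forall>i. Suc i < length cs \<longrightarrow> adj E (cs ! i) (cs ! Suc i)) \<and>
     adj E (last cs) (hd cs)"

definition acyclic_graph :: "'a set set \<Rightarrow> bool" where
  "acyclic_graph E \<longleftrightarrow> \<not> (\<exists>cs. is_cycle E cs)"

definition is_tree :: "'a set \<Rightarrow> 'a set set \<Rightarrow> bool" where
  "is_tree V E \<longleftrightarrow> connected_graph V E \<and> acyclic_graph E"

definition deg :: "'a set set \<Rightarrow> 'a \<Rightarrow> nat" where
  "deg E u = card {v. {u, v} \<in> E}"

text \<open>Sums over edges e = {u,v}, each edge counted once:
  d_u d_v = prod of degrees over e, d_u + d_v = sum over e, d_u^2 + d_v^2 = sum of squares over e.\<close>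
definition assort_num :: "'a set set \<Rightarrow> real" where
  "assort_num E = (let m = real (card E);
      S1 = (\<Sum>e\<in>E. \<Prod>u\<in>e. real (deg E u)) / m;
      S2 = (\<Sum>e\<in>E. (1/2) * (\<Sum>u\<in>e. real (deg E u))) / m
    in S1 - S2\<^sup>2)"

definition assort_den :: "'a set set \<Rightarrow> real" where
  "assort_den E = (let m = real (card E);
      S3 = (\<Sum>e\<in>E. (1/2) * (\<Sum>u\<in>e. real (deg E u) ^ 2)) / m;
      S2 = (\<Sum>e\<in>E. (1/2) * (\<Sum>u\<in>e. real (deg E u))) / m
    in S3 - S2\<^sup>2)"

definition assortativity :: "'a set set \<Rightarrow> real" where
  "assortativity E = assort_num E / assort_den E"

definition neutral :: "'a set set \<Rightarrow> bool" where
  "neutral E \<longleftrightarrow> card E \<ge> 1 \<and> assort_den E \<noteq> 0 \<and> assortativity E = 0"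

end

theory Submission
  imports Defs
begin

(* If every edge has an endpoint of degree k, then d_u d_v = k (d_u + d_v) - k^2 on every edge,
   so the numerator of r is -(mu - k)^2, where mu is the mean degree of an edge end, and
   mu = k exactly when the sum over vertices of d_v (d_v - k) vanishes. The denominator is the
   variance of the edge-end degree, hence nonzero unless every edge end has degree mu.
   For n = M + 13 take the square of a path on M + 6 vertices (containing triangles) and raise
   its four end vertices to degree 4 using a hub of degree 6 and two further vertices of degree 4,
   each of which carries two leaves. All remaining degrees are 4, every edge meets a vertex of
   degree 4, and in the sum of d_v (d_v - 4) the hub contributes 12 and the four leaves -12. *)

lemma adj_sym: "adj E u v \<longleftrightarrow> adj E v u"
  by (simp add: adj_def insert_commute)

lemma simple_graph_finite_edges:
  assumes "simple_graph V E"
  shows "finite E"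
proof (rule finite_subset)
  show "E \<subseteq> Pow V" and "finite (Pow V)" using assms by (auto simp: simple_graph_def)
qed

lemma simple_graph_card_edge:
  assumes "simple_graph V E" "e \<in> E"
  shows "card e = 2"
  using assms by (auto simp: simple_graph_def)

lemma card_edges_containing:
  assumes "simple_graph V E"
  shows "card {e \<in> E. u \<in> e} = deg E u"
proof -
  have "{e \<in> E. u \<in> e} = (\<lambda>v. {u, v}) ` {v. {u, v} \<in> E}"
    using assms by (fastforce simp: simple_graph_def insert_commute)
  moreover have "inj_on (\<lambda>v. {u, v}) {v. {u, v} \<in> E}"
    by (auto simp: inj_on_def doubleton_eq_iff)
  ultimately show ?thesis by (simp add: card_image deg_def)
qed

lemma sum_edges_sum_endpoints:
  fixes g :: "'a \<Rightarrow> 'b::comm_semiring_1"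
  assumes "simple_graph V E"
  shows "(\<Sum>e\<in>E. \<Sum>u\<in>e. g u) = (\<Sum>v\<in>V. of_nat (deg E v) * g v)"
proof -
  have finV: "finite V" and edges: "\<And>e. e \<in> E \<Longrightarrow> e \<subseteq> V"
    using assms by (auto simp: simple_graph_def)
  have "(\<Sum>e\<in>E. \<Sum>u\<in>e. g u) = (\<Sum>e\<in>E. \<Sum>u\<in>{u \<in> V. u \<in> e}. g u)"
    using edges by (intro sum.cong) (auto simp: Int_absorb1 Collect_conj_eq[symmetric])
  also have "\<dots> = (\<Sum>u\<in>V. \<Sum>e\<in>{e \<in> E. u \<in> e}. g u)"
    by (rule sum.swap_restrict[OF simple_graph_finite_edges[OF assms] finV])
  also have "\<dots> = (\<Sum>v\<in>V. of_nat (deg E v) * g v)"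
    by (simp add: card_edges_containing[OF assms])
  finally show ?thesis .
qed

definition mean_end_degree :: "'a set set \<Rightarrow> real" where
  "mean_end_degree E = (\<Sum>e\<in>E. (1/2) * (\<Sum>u\<in>e. real (deg E u))) / real (card E)"

lemma mean_end_degree_eqI:
  assumes G: "simple_graph V E" and "E \<noteq> {}"
    and balanced: "(\<Sum>v\<in>V. real (deg E v) * (real (deg E v) - real k)) = 0"
  shows "mean_end_degree E = real k"
proof -
  have "(\<Sum>e\<in>E. \<Sum>u\<in>e. real (deg E u)) = (\<Sum>v\<in>V. real (deg E v) * real (deg E v))"
    using sum_edges_sum_endpoints[OF G, of "\<lambda>u. real (deg E u)"] by simp
  also have "\<dots> = real k * (\<Sum>v\<in>V. real (deg E v) * 1)"
    using balanced by (simp add: sum_distrib_left algebra_simps sum_subtractf)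
  also have "\<dots> = real k * (\<Sum>e\<in>E. \<Sum>u\<in>e. 1)"
    using sum_edges_sum_endpoints[OF G, of "\<lambda>_. 1::real"] by simp
  also have "\<dots> = 2 * real k * real (card E)"
    using simple_graph_card_edge[OF G] by simp
  finally have "(\<Sum>e\<in>E. (1/2) * (\<Sum>u\<in>e. real (deg E u))) = real k * real (card E)"
    by (simp only: sum_distrib_left[symmetric])
  then show ?thesis
    using simple_graph_finite_edges[OF G] \<open>E \<noteq> {}\<close> by (simp add: mean_end_degree_def)
qed

lemma assort_num_eq_neg_square:
  assumes G: "simple_graph V E" and "E \<noteq> {}"
    and meets: "\<forall>e\<in>E. \<exists>u\<in>e. deg E u = k"
  shows "assort_num E = - (mean_end_degree E - real k)\<^sup>2"
proof -
  define m where "m = real (card E)"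
  define S where "S = (\<Sum>e\<in>E. (1/2) * (\<Sum>u\<in>e. real (deg E u)))"
  have "m > 0"
    using simple_graph_finite_edges[OF G] \<open>E \<noteq> {}\<close> by (simp add: m_def card_gt_0_iff)
  have edge: "(\<Prod>u\<in>e. real (deg E u)) = 2 * real k * ((1/2) * (\<Sum>u\<in>e. real (deg E u))) - (real k)\<^sup>2"
    if "e \<in> E" for e
  proof -
    obtain a b where "a \<noteq> b" "e = {a, b}" using G \<open>e \<in> E\<close> by (auto simp: simple_graph_def)
    moreover have "deg E a = k \<or> deg E b = k" using meets \<open>e \<in> E\<close> \<open>e = {a, b}\<close> by auto
    ultimately show ?thesis by (auto simp: power2_eq_square algebra_simps)
  qed
  have "(\<Sum>e\<in>E. \<Prod>u\<in>e. real (deg E u)) = 2 * real k * S - (real k)\<^sup>2 * m"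
    unfolding S_def m_def by (simp add: edge sum_subtractf sum_distrib_left del: sum_divide_distrib)
  then have "assort_num E = (2 * real k * S - (real k)\<^sup>2 * m) / m - (S / m)\<^sup>2"
    by (simp add: assort_num_def Let_def S_def m_def)
  also have "\<dots> = - (S / m - real k)\<^sup>2"
    using \<open>m > 0\<close> by (simp add: field_simps power2_eq_square)
  finally show ?thesis by (simp add: mean_end_degree_def S_def m_def)
qed

lemma assort_den_eq_variance:
  assumes G: "simple_graph V E" and "E \<noteq> {}"
  shows "assort_den E =
    (\<Sum>e\<in>E. (1/2) * (\<Sum>u\<in>e. (real (deg E u) - mean_end_degree E)\<^sup>2)) / real (card E)"
proof -
  define m where "m = real (card E)"
  define \<mu> where "\<mu> = mean_end_degree E"
  define S where "S = (\<Sum>e\<in>E. (1/2) * (\<Sum>u\<in>e. real (deg E u)))"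
  define Q where "Q = (\<Sum>e\<in>E. (1/2) * (\<Sum>u\<in>e. real (deg E u) ^ 2))"
  have "m > 0"
    using simple_graph_finite_edges[OF G] \<open>E \<noteq> {}\<close> by (simp add: m_def card_gt_0_iff)
  have \<mu>_eq: "\<mu> = S / m"
    by (simp add: \<mu>_def mean_end_degree_def S_def m_def)
  have edge: "(1/2) * (\<Sum>u\<in>e. (real (deg E u) - \<mu>)\<^sup>2)
      = (1/2) * (\<Sum>u\<in>e. real (deg E u) ^ 2) - 2 * \<mu> * ((1/2) * (\<Sum>u\<in>e. real (deg E u))) + \<mu>\<^sup>2"
    if "e \<in> E" for e
    using simple_graph_card_edge[OF G that]
    by (simp add: power2_diff sum_subtractf sum.distrib sum_distrib_left algebra_simps)
  have "(\<Sum>e\<in>E. (1/2) * (\<Sum>u\<in>e. (real (deg E u) - \<mu>)\<^sup>2))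
      = (\<Sum>e\<in>E. (1/2) * (\<Sum>u\<in>e. real (deg E u) ^ 2)
          - 2 * \<mu> * ((1/2) * (\<Sum>u\<in>e. real (deg E u))) + \<mu>\<^sup>2)"
    by (rule sum.cong[OF refl edge])
  also have "\<dots> = Q - 2 * \<mu> * S + \<mu>\<^sup>2 * m"
    unfolding Q_def S_def m_def
    by (simp only: sum.distrib sum_subtractf sum_distrib_left[symmetric] sum_constant mult.commute)
  also have "\<dots> = (Q / m - (S / m)\<^sup>2) * m"
    using \<open>m > 0\<close> by (simp add: \<mu>_eq field_simps power2_eq_square)
  finally show ?thesis
    using \<open>m > 0\<close> by (simp add: assort_den_def Let_def Q_def S_def m_def \<mu>_def)
qed

lemma neutral_if_edges_meet_degree:
  assumes G: "simple_graph V E"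
    and meets: "\<forall>e\<in>E. \<exists>u\<in>e. deg E u = k"
    and balanced: "(\<Sum>v\<in>V. real (deg E v) * (real (deg E v) - real k)) = 0"
    and irregular: "\<exists>e\<in>E. \<exists>u\<in>e. deg E u \<noteq> k"
  shows "neutral E"
proof -
  obtain e u where "e \<in> E" "u \<in> e" "deg E u \<noteq> k" using irregular by blast
  then have "E \<noteq> {}" by blast
  have fin: "finite E" using simple_graph_finite_edges[OF G] .
  have mean: "mean_end_degree E = real k"
    using mean_end_degree_eqI[OF G \<open>E \<noteq> {}\<close> balanced] .
  have "assort_num E = 0"
    using assort_num_eq_neg_square[OF G \<open>E \<noteq> {}\<close> meets] mean by simp
  moreover have "assort_den E > 0"
  proof -
    have "(\<Sum>u\<in>e. (real (deg E u) - real k)\<^sup>2) > 0"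
      using \<open>u \<in> e\<close> \<open>deg E u \<noteq> k\<close> simple_graph_card_edge[OF G \<open>e \<in> E\<close>]
      by (intro sum_pos2[of e u]) (auto intro: card_ge_0_finite)
    then have "(\<Sum>e\<in>E. (1/2) * (\<Sum>u\<in>e. (real (deg E u) - real k)\<^sup>2)) > 0"
      using fin \<open>e \<in> E\<close> by (intro sum_pos2[of E e]) (auto intro: sum_nonneg)
    then show ?thesis
      using assort_den_eq_variance[OF G \<open>E \<noteq> {}\<close>] mean fin \<open>E \<noteq> {}\<close>
      by (simp add: card_gt_0_iff)
  qed
  moreover have "card E \<ge> 1" using fin \<open>E \<noteq> {}\<close> by (simp add: Suc_le_eq card_gt_0_iff)
  ultimately show ?thesis by (simp add: neutral_def assortativity_def)
qed

lemma connected_graph_if_smaller_neighbour: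
  fixes V :: "nat set"
  assumes "0 \<in> V" and smaller: "\<forall>v\<in>V. v \<noteq> 0 \<longrightarrow> (\<exists>w\<in>V. w < v \<and> adj E w v)"
  shows "connected_graph V E"
proof -
  define R where "R = {(x, y). adj E x y}"
  have from_0: "(0, v) \<in> R\<^sup>*" if "v \<in> V" for v
    using that
  proof (induction v rule: less_induct)
    case (less v)
    show ?case
    proof (cases "v = 0")
      case False
      then obtain w where "w \<in> V" "w < v" "adj E w v" using smaller less.prems by blast
      then show ?thesis using less.IH by (auto simp: R_def intro: rtrancl_into_rtrancl)
    qed simp
  qed
  have "R\<inverse> = R" by (auto simp: R_def adj_sym)
  then have to_0: "(v, 0) \<in> R\<^sup>*" if "v \<in> V" for v
    using rtrancl_converseI[OF from_0[OF that]] by simp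
  show ?thesis
    unfolding connected_graph_def R_def[symmetric]
    using \<open>0 \<in> V\<close> to_0 from_0 by (blast intro: rtrancl_trans)
qed

(* Vertices 0, ..., M + 5 carry the square of a path, M + 6 is the hub, and M + 7, M + 8
   carry the leaves M + 9, M + 10 and M + 11, M + 12 respectively. *)
definition path_square_adj :: "nat \<Rightarrow> nat \<Rightarrow> nat \<Rightarrow> bool" where
  "path_square_adj N u v \<longleftrightarrow> u < N \<and> v < N \<and> u \<noteq> v \<and> u \<le> v + 2 \<and> v \<le> u + 2"

definition attachment :: "nat \<Rightarrow> nat \<Rightarrow> nat \<Rightarrow> bool" where
  "attachment M u v \<longleftrightarrow>
     u = M + 6 \<and> v \<in> {0, 1, M + 4, M + 5, M + 7, M + 8} \<or>
     u = M + 7 \<and> v \<in> {0, M + 9, M + 10} \<or>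
     u = M + 8 \<and> v \<in> {M + 5, M + 11, M + 12}"

definition example_adj :: "nat \<Rightarrow> nat \<Rightarrow> nat \<Rightarrow> bool" where
  "example_adj M u v \<longleftrightarrow> path_square_adj (M + 6) u v \<or> attachment M u v \<or> attachment M v u"

definition example_edges :: "nat \<Rightarrow> nat set set" where
  "example_edges M = {{u, v} | u v. example_adj M u v}"

definition example_deg :: "nat \<Rightarrow> nat \<Rightarrow> nat" where
  "example_deg M u = (if u = M + 6 then 6 else if M + 9 \<le> u then 1 else 4)"

lemma example_adj_sym: "example_adj M u v \<longleftrightarrow> example_adj M v u"
  by (auto simp: example_adj_def path_square_adj_def)

lemma adj_example_edges: "adj (example_edges M) u v \<longleftrightarrow> example_adj M u v"
  by (auto simp: adj_def example_edges_def doubleton_eq_iff example_adj_sym)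

lemma example_adjD:
  "example_adj M u v \<Longrightarrow> u < M + 13 \<and> v < M + 13 \<and> u \<noteq> v \<and> (example_deg M u = 4 \<or> example_deg M v = 4)"
  by (auto simp: example_adj_def path_square_adj_def attachment_def example_deg_def)

lemma simple_graph_example: "simple_graph {0..<M + 13} (example_edges M)"
  by (fastforce simp: simple_graph_def example_edges_def dest: example_adjD)

lemma card_neighbours_example_path:
  assumes "u < M + 6"
  shows "card {v. example_adj M u v} = example_deg M u"
proof -
  consider "u = 0" | "u = 1" | "2 \<le> u" "u \<le> M + 3" | "u = M + 4" | "u = M + 5"
    using assms by atomize_elim arith
  then show ?thesis
  proof cases
    case 1
    then have "{v. example_adj M u v} = {1, 2, M + 6, M + 7}"
      by (auto simp: example_adj_def path_square_adj_def attachment_def)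
    then show ?thesis using 1 by (simp add: example_deg_def)
  next
    case 2
    then have "{v. example_adj M u v} = {0, 2, 3, M + 6}"
      by (auto simp: example_adj_def path_square_adj_def attachment_def)
    then show ?thesis using 2 by (simp add: example_deg_def)
  next
    case 3
    then have "{v. example_adj M u v} = {u - 2, u - 1, u + 1, u + 2}"
      by (auto simp: example_adj_def path_square_adj_def attachment_def)
    then show ?thesis using 3 by (auto simp: example_deg_def card_insert_if)
  next
    case 4
    then have "{v. example_adj M u v} = {M + 2, M + 3, M + 5, M + 6}"
      by (auto simp: example_adj_def path_square_adj_def attachment_def)
    then show ?thesis using 4 by (simp add: example_deg_def)
  next
    case 5
    then have "{v. example_adj M u v} = {M + 3, M + 4, M + 6, M + 8}"
      by (auto simp: example_adj_def path_square_adj_def attachment_def)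
    then show ?thesis using 5 by (simp add: example_deg_def)
  qed
qed

lemma card_neighbours_example_attached:
  assumes "M + 6 \<le> u" "u < M + 13"
  shows "card {v. example_adj M u v} = example_deg M u"
proof -
  consider "u = M + 6" | "u = M + 7" | "u = M + 8" | "u = M + 9 \<or> u = M + 10" | "u = M + 11 \<or> u = M + 12"
    using assms by atomize_elim arith
  then show ?thesis
  proof cases
    case 1
    then have "{v. example_adj M u v} = {0, 1, M + 4, M + 5, M + 7, M + 8}"
      by (auto simp: example_adj_def path_square_adj_def attachment_def)
    then show ?thesis using 1 by (simp add: example_deg_def)
  next
    case 2
    then have "{v. example_adj M u v} = {0, M + 6, M + 9, M + 10}"
      by (auto simp: example_adj_def path_square_adj_def attachment_def)
    then show ?thesis using 2 by (simp add: example_deg_def)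
  next
    case 3
    then have "{v. example_adj M u v} = {M + 5, M + 6, M + 11, M + 12}"
      by (auto simp: example_adj_def path_square_adj_def attachment_def)
    then show ?thesis using 3 by (simp add: example_deg_def)
  next
    case 4
    then have "{v. example_adj M u v} = {M + 7}"
      by (auto simp: example_adj_def path_square_adj_def attachment_def)
    then show ?thesis using 4 by (auto simp: example_deg_def)
  next
    case 5
    then have "{v. example_adj M u v} = {M + 8}"
      by (auto simp: example_adj_def path_square_adj_def attachment_def)
    then show ?thesis using 5 by (auto simp: example_deg_def)
  qed
qed

lemma deg_example:
  assumes "u < M + 13"
  shows "deg (example_edges M) u = example_deg M u"
proof -
  have "deg (example_edges M) u = card {v. example_adj M u v}"
    by (simp add: deg_def adj_example_edges[unfolded adj_def])
  then show ?thesis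
    using assms card_neighbours_example_path card_neighbours_example_attached
    by (cases "u < M + 6") auto
qed

lemma example_edges_meet_degree_4:
  "\<forall>e\<in>example_edges M. \<exists>u\<in>e. deg (example_edges M) u = 4"
proof
  fix e assume "e \<in> example_edges M"
  then obtain u v where "e = {u, v}" "example_adj M u v" by (auto simp: example_edges_def)
  then show "\<exists>u\<in>e. deg (example_edges M) u = 4"
    using example_adjD[of M u v] by (auto simp: deg_example)
qed

lemma example_irregular:
  "\<exists>e\<in>example_edges M. \<exists>u\<in>e. deg (example_edges M) u \<noteq> 4"
proof -
  have "{0, M + 6} \<in> example_edges M"
    by (auto simp: example_edges_def example_adj_def attachment_def)
  moreover have "deg (example_edges M) (M + 6) \<noteq> 4"
    by (simp add: deg_example example_deg_def)
  ultimately show ?thesis by blast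
qed

lemma example_degree_balance:
  "(\<Sum>v\<in>{0..<M + 13}. real (deg (example_edges M) v) * (real (deg (example_edges M) v) - 4)) = 0"
proof -
  have "(\<Sum>v\<in>{0..<M + 13}. real (deg (example_edges M) v) * (real (deg (example_edges M) v) - 4))
      = (\<Sum>v\<in>{0..<M + 13}. real (example_deg M v) * (real (example_deg M v) - 4))"
    by (simp add: deg_example)
  also have "\<dots> = (\<Sum>v\<in>{M + 6, M + 9, M + 10, M + 11, M + 12}. real (example_deg M v) * (real (example_deg M v) - 4))"
    by (rule sum.mono_neutral_right) (auto simp: example_deg_def)
  also have "\<dots> = 0"
    by (simp add: example_deg_def)
  finally show ?thesis .
qed

lemma connected_graph_example: "connected_graph {0..<M + 13} (example_edges M)"
proof (rule connected_graph_if_smaller_neighbour)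
  show "\<forall>v\<in>{0..<M + 13}. v \<noteq> 0 \<longrightarrow> (\<exists>w\<in>{0..<M + 13}. w < v \<and> adj (example_edges M) w v)"
  proof (intro ballI impI)
    fix v assume "v \<in> {0..<M + 13}" "v \<noteq> 0"
    then consider "0 < v" "v \<le> M + 5" | "v = M + 6" | "v = M + 7" | "v = M + 8"
      | "v = M + 9 \<or> v = M + 10" | "v = M + 11 \<or> v = M + 12"
      by atomize_elim auto
    then show "\<exists>w\<in>{0..<M + 13}. w < v \<and> adj (example_edges M) w v"
    proof cases
      case 1
      then show ?thesis
        by (intro bexI[of _ "v - 1"]) (auto simp: adj_example_edges example_adj_def path_square_adj_def)
    next
      case 2
      then show ?thesis
        by (intro bexI[of _ "M + 5"]) (auto simp: adj_example_edges example_adj_def attachment_def)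
    next
      case 3
      then show ?thesis
        by (intro bexI[of _ "M + 6"]) (auto simp: adj_example_edges example_adj_def attachment_def)
    next
      case 4
      then show ?thesis
        by (intro bexI[of _ "M + 6"]) (auto simp: adj_example_edges example_adj_def attachment_def)
    next
      case 5
      then show ?thesis
        by (intro bexI[of _ "M + 7"]) (auto simp: adj_example_edges example_adj_def attachment_def)
    next
      case 6
      then show ?thesis
        by (intro bexI[of _ "M + 8"]) (auto simp: adj_example_edges example_adj_def attachment_def)
    qed
  qed
qed simp

lemma example_triangle: "is_cycle (example_edges M) [0, 1, 2]"
  by (auto simp: is_cycle_def adj_example_edges example_adj_def path_square_adj_def nth_Cons
      split: nat.splits)

lemma neutral_example: "neutral (example_edges M)"
proof (rule neutral_if_edges_meet_degree[OF simple_graph_example example_edges_meet_degree_4])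
  show "(\<Sum>v\<in>{0..<M + 13}. real (deg (example_edges M) v) * (real (deg (example_edges M) v) - real 4)) = 0"
    using example_degree_balance by simp
qed (rule example_irregular)

theorem theorem4:
  fixes n :: nat
  assumes "n \<ge> 13"
  shows "\<exists>(V :: nat set) (E :: nat set set).
           card V = n \<and> simple_graph V E \<and> connected_graph V E \<and>
           neutral E \<and> \<not> is_tree V E"
proof -
  obtain M where "n = M + 13" using assms by (metis add.commute le_Suc_ex)
  then have "card {0..<M + 13} = n" by simp
  moreover have "\<not> is_tree {0..<M + 13} (example_edges M)"
    using example_triangle by (auto simp: is_tree_def acyclic_graph_def)
  ultimately show ?thesis
    using simple_graph_example connected_graph_example neutral_example by blast
qed

end
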